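(* Let $\mathscr C,J$ be as defined below. The isomorphism classes of points of the topos $\mathfrak{Sh}(\mathscr C,J)$ are in canonical bijection with the disjoint union of (a) the set of isomorphism classes of abstract (non-trivial) rank one totally ordered abelian groups $H$, via $H\mapsto\mathfrak{q}_H$, and (b) the set of non-trivial rank one subgroups $H\subset\mathbb{R}$, via $H\mapsto\mathfrak{p}_H$. Here $\mathfrak{p}_H$ is the point given by the flat continuous functor $F_H(V)=V\cap H\cap(0,\infty)$ (morphisms $n$ acting by multiplication by $n$), and $\mathfrak{q}_H$ is the point given by the flat continuous functor $F'_H$ with $F'_H(V)=\emptyset$ if $0\notin V$ and $F'_H(V)=H_+:=\{h\in H\mid h>0\}$ if $0\in V$ (morphisms $n$ acting by multiplication by $n$ on $H_+$). (This disjoint union is the set of points of the arithmetic site over $\mathbb{R}_+^{\max}$, i.e. the sector $\mathbb{Q}^\times\backslash\mathbb{A}_{\mathbb{Q}}/\hat{\mathbb{Z}}^*$ of the adele class space of $\mathbb{Q}$.)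
   Context: $\mathbb{N}^{\times}$ is the multiplicative monoid of positive integers. $\mathscr C$ is the small category whose objects are the (possibly empty) bounded open subintervals of $[0,\infty)$ (including intervals $[0,a)$), with $\mathrm{Hom}_{\mathscr C}(\Omega,\Omega')=\{n\in\mathbb{N}^{\times}\mid n\Omega\subset\Omega'\}$ for $\Omega\neq\emptyset$, $\mathrm{Hom}_{\mathscr C}(\emptyset,\Omega')$ a singleton, composition being multiplication. $J$ is the Grothendieck topology on $\mathscr C$ generated by ordinary open covers of intervals by subintervals; $\mathfrak{Sh}(\mathscr C,J)$ is equivalent to the topos of $\mathbb{N}^{\times}$-equivariant sheaves of sets on $[0,\infty)$, denoted $[0,\infty)\rtimes\mathbb{N}^{\times}$. Points of this topos correspond to flat (i.e. filtering) continuous (i.e. sending covers to jointly surjective families) functors $\mathscr C\to\mathfrak{Sets}$. A rank one group is one isomorphic to a non-zero subgroup of $\mathbb{Q}$; an abstract rank one ordered group is a totally ordered abelian group order-isomorphic to a non-zero subgroup of $\mathbb{Q}$. *)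

theory Defs
  imports Complex_Main
begin

definition obj :: "real set \<Rightarrow> bool" where
  "obj V \<longleftrightarrow> V = {} \<or> (\<exists>a b. 0 \<le> a \<and> a < b \<and> V = {a<..<b}) \<or> (\<exists>b. 0 < b \<and> V = {0..<b})"

definition mor :: "real set \<Rightarrow> real set \<Rightarrow> nat set" where
  "mor V W = (if V = {} then {1} else {n. 0 < n \<and> (\<lambda>x. real n * x) ` V \<subseteq> W})"

text \<open>Composition (m after n) of morphisms with source V: multiplication
  (on the singleton hom-sets out of the empty interval it is the unique morphism).\<close>
definition cmp :: "real set \<Rightarrow> nat \<Rightarrow> nat \<Rightarrow> nat" where
  "cmp V m n = (if V = {} then 1 else m * n)"

definition is_functor :: "(real set \<Rightarrow> 'a set) \<Rightarrow> (real set \<Rightarrow> real set \<Rightarrow> nat \<Rightarrow> 'a \<Rightarrow> 'a) \<Rightarrow> bool" where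
  "is_functor F Fm \<longleftrightarrow>
     (\<forall>V W n x. obj V \<and> obj W \<and> n \<in> mor V W \<and> x \<in> F V \<longrightarrow> Fm V W n x \<in> F W) \<and>
     (\<forall>V x. obj V \<and> x \<in> F V \<longrightarrow> Fm V V 1 x = x) \<and>
     (\<forall>U V W n m x. obj U \<and> obj V \<and> obj W \<and> n \<in> mor U V \<and> m \<in> mor V W \<and> x \<in> F U \<longrightarrow>
        Fm V W m (Fm U V n x) = Fm U W (cmp U m n) x)"

definition flat :: "(real set \<Rightarrow> 'a set) \<Rightarrow> (real set \<Rightarrow> real set \<Rightarrow> nat \<Rightarrow> 'a \<Rightarrow> 'a) \<Rightarrow> bool" where
  "flat F Fm \<longleftrightarrow>
     (\<exists>V. obj V \<and> F V \<noteq> {}) \<and>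
     (\<forall>V W x y. obj V \<and> obj W \<and> x \<in> F V \<and> y \<in> F W \<longrightarrow>
        (\<exists>U z u v. obj U \<and> z \<in> F U \<and> u \<in> mor U V \<and> v \<in> mor U W \<and>
                   Fm U V u z = x \<and> Fm U W v z = y)) \<and>
     (\<forall>V W u v x. obj V \<and> obj W \<and> u \<in> mor V W \<and> v \<in> mor V W \<and> x \<in> F V \<and>
                  Fm V W u x = Fm V W v x \<longrightarrow>
        (\<exists>U z w. obj U \<and> z \<in> F U \<and> w \<in> mor U V \<and> Fm U V w z = x \<and>
                 cmp U u w = cmp U v w))"

text \<open>Continuity: ordinary open covers of an interval by subintervals (inclusion
  morphisms, i.e. n = 1) are sent to jointly surjective families.\<close>
definition continuous_functor :: "(real set \<Rightarrow> 'a set) \<Rightarrow> (real set \<Rightarrow> real set \<Rightarrow> nat \<Rightarrow> 'a \<Rightarrow> 'a) \<Rightarrow> bool" where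
  "continuous_functor F Fm \<longleftrightarrow>
     (\<forall>V S. obj V \<and> (\<forall>W\<in>S. obj W \<and> W \<subseteq> V) \<and> \<Union>S = V \<longrightarrow>
        (\<forall>x\<in>F V. \<exists>W\<in>S. \<exists>y\<in>F W. Fm W V 1 y = x))"

definition flat_continuous :: "(real set \<Rightarrow> 'a set) \<Rightarrow> (real set \<Rightarrow> real set \<Rightarrow> nat \<Rightarrow> 'a \<Rightarrow> 'a) \<Rightarrow> bool" where
  "flat_continuous F Fm \<longleftrightarrow> is_functor F Fm \<and> flat F Fm \<and> continuous_functor F Fm"

definition nat_iso :: "(real set \<Rightarrow> 'a set) \<Rightarrow> (real set \<Rightarrow> real set \<Rightarrow> nat \<Rightarrow> 'a \<Rightarrow> 'a) \<Rightarrow>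
                       (real set \<Rightarrow> 'b set) \<Rightarrow> (real set \<Rightarrow> real set \<Rightarrow> nat \<Rightarrow> 'b \<Rightarrow> 'b) \<Rightarrow> bool" where
  "nat_iso F Fm G Gm \<longleftrightarrow>
     (\<exists>\<eta>. (\<forall>V. obj V \<longrightarrow> bij_betw (\<eta> V) (F V) (G V)) \<and>
          (\<forall>V W n x. obj V \<and> obj W \<and> n \<in> mor V W \<and> x \<in> F V \<longrightarrow>
              \<eta> W (Fm V W n x) = Gm V W n (\<eta> V x)))"

definition add_subgroup :: "'a::ab_group_add set \<Rightarrow> bool" where
  "add_subgroup H \<longleftrightarrow> 0 \<in> H \<and> (\<forall>x\<in>H. \<forall>y\<in>H. x + y \<in> H) \<and> (\<forall>x\<in>H. - x \<in> H)"

text \<open>Non-zero subgroups of Q: representatives of abstract rank one ordered groups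
  (with the order induced from Q).\<close>
definition rank_one_rat :: "rat set \<Rightarrow> bool" where
  "rank_one_rat H \<longleftrightarrow> add_subgroup H \<and> H \<noteq> {0}"

definition ord_group_iso :: "rat set \<Rightarrow> rat set \<Rightarrow> bool" where
  "ord_group_iso H K \<longleftrightarrow> (\<exists>f. bij_betw f H K \<and> (\<forall>x\<in>H. \<forall>y\<in>H. f (x + y) = f x + f y) \<and>
                              (\<forall>x\<in>H. \<forall>y\<in>H. x < y \<longrightarrow> f x < f y))"

definition rank_one_real :: "real set \<Rightarrow> bool" where
  "rank_one_real H \<longleftrightarrow> add_subgroup H \<and> H \<noteq> {0} \<and>
     (\<exists>K. rank_one_rat K \<and> (\<exists>f. bij_betw f H K \<and> (\<forall>x\<in>H. \<forall>y\<in>H. f (x + y) = f x + f y)))"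

definition FH :: "real set \<Rightarrow> real set \<Rightarrow> real set" where
  "FH H V = V \<inter> H \<inter> {0<..}"

definition FHm :: "real set \<Rightarrow> real set \<Rightarrow> nat \<Rightarrow> real \<Rightarrow> real" where
  "FHm V W n x = real n * x"

definition F'H :: "rat set \<Rightarrow> real set \<Rightarrow> rat set" where
  "F'H H V = (if 0 \<in> V then {h\<in>H. h > 0} else {})"

definition F'Hm :: "real set \<Rightarrow> real set \<Rightarrow> nat \<Rightarrow> rat \<Rightarrow> rat" where
  "F'Hm V W n x = of_nat n * x"

end

theory Submission
  imports Defs
begin

text \<open>Continuity attaches to each element \<open>\<xi> \<in> F V\<close> of a point \<open>F\<close> a point of \<open>V\<close> at which it
  is supported (every neighbourhood of it carries a preimage of \<open>\<xi>\<close>), and flatness makes this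
  point unique, since \<open>N\<^sup>\<times>\<close> acts freely. Comparing every \<open>\<xi>\<close> with a fixed base element \<open>x0\<close>
  through a common preimage (\<open>\<xi> = a z\<close>, \<open>x0 = b z\<close>) gives an injective equivariant ratio
  \<open>a/b \<in> \<rat>\<^sub>>\<^sub>0\<close>; the ratios form the positive cone of a rank one group \<open>K \<subseteq> \<rat>\<close>, and \<open>\<xi>\<close> is
  supported at \<open>\<lambda> \<cdot> ratio \<xi>\<close>, where \<open>\<lambda>\<close> is the support of \<open>x0\<close>. So \<open>F \<cong> q\<^sub>K\<close> if \<open>\<lambda> = 0\<close> and
  \<open>F \<cong> p\<^sub>\<lambda>\<^sub>K\<close> if \<open>\<lambda> > 0\<close>. A natural isomorphism \<open>p\<^sub>H \<cong> p\<^sub>K\<close> commutes with restriction to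
  arbitrarily small neighbourhoods and therefore fixes every element, so \<open>H = K\<close>; one between
  \<open>q\<^sub>H\<close> and \<open>q\<^sub>K\<close> is an equivariant bijection \<open>H\<^sub>+ \<rightarrow> K\<^sub>+\<close>, additive because any two positive
  elements have a common submultiple, i.e. an ordered isomorphism; and \<open>p\<^sub>H \<not>\<cong> q\<^sub>K\<close> since
  \<open>p\<^sub>H\<close> is non-empty on intervals avoiding \<open>0\<close>.\<close>

section \<open>Additive subgroups of ordered fields\<close>

lemma add_subgroup_zero: "add_subgroup H \<Longrightarrow> 0 \<in> H"
  unfolding add_subgroup_def by blast

lemma add_subgroup_add: "add_subgroup H \<Longrightarrow> x \<in> H \<Longrightarrow> y \<in> H \<Longrightarrow> x + y \<in> H"
  unfolding add_subgroup_def by blast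

lemma add_subgroup_uminus: "add_subgroup H \<Longrightarrow> x \<in> H \<Longrightarrow> - x \<in> H"
  unfolding add_subgroup_def by blast

lemma add_subgroup_diff: "add_subgroup H \<Longrightarrow> x \<in> H \<Longrightarrow> y \<in> H \<Longrightarrow> x - y \<in> H"
  using add_subgroup_add add_subgroup_uminus by (metis diff_conv_add_uminus)

lemma add_subgroup_of_nat_mult:
  fixes H :: "'a::ring_1 set"
  assumes "add_subgroup H" "x \<in> H"
  shows "of_nat n * x \<in> H"
  using assms by (induction n) (auto simp: algebra_simps add_subgroup_zero add_subgroup_add)

lemma add_subgroup_of_int_mult:
  fixes H :: "'a::ring_1 set"
  assumes "add_subgroup H" "x \<in> H"
  shows "of_int i * x \<in> H"
proof (cases "i \<ge> 0")
  case True
  then have "of_int i * x = of_nat (nat i) * x" by simp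
  then show ?thesis using add_subgroup_of_nat_mult assms by metis
next
  case False
  then have "of_int i * x = - (of_nat (nat (- i)) * x)" by simp
  then show ?thesis using add_subgroup_of_nat_mult add_subgroup_uminus assms by metis
qed

lemma add_subgroup_ex_pos:
  fixes H :: "'a::linordered_ab_group_add set"
  assumes "add_subgroup H" "H \<noteq> {0}"
  shows "\<exists>h\<in>H. h > 0"
proof -
  obtain x where x: "x \<in> H" "x \<noteq> 0" using assms add_subgroup_zero by blast
  then have "x > 0 \<or> - x > 0" by (auto simp: neq_iff)
  then show ?thesis using x add_subgroup_uminus[OF assms(1)] by blast
qed

lemma add_subgroup_eqI_pos:
  fixes H K :: "'a::linordered_ab_group_add set"
  assumes H: "add_subgroup H" and K: "add_subgroup K" and pos: "\<And>h. h > 0 \<Longrightarrow> h \<in> H \<longleftrightarrow> h \<in> K"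
  shows "H = K"
proof -
  have "h \<in> H \<longleftrightarrow> h \<in> K" for h
  proof -
    consider "h > 0" | "h = 0" | "- h > 0" by (metis neg_0_less_iff_less neq_iff)
    then show ?thesis
    proof cases
      case 3
      then show ?thesis using pos[OF 3] add_subgroup_uminus[OF H] add_subgroup_uminus[OF K]
        by (metis minus_minus)
    qed (use pos add_subgroup_zero H K in auto)
  qed
  then show ?thesis by blast
qed

definition additive_on :: "'a::ab_group_add set \<Rightarrow> ('a \<Rightarrow> 'b::ab_group_add) \<Rightarrow> bool" where
  "additive_on H f \<longleftrightarrow> (\<forall>x\<in>H. \<forall>y\<in>H. f (x + y) = f x + f y)"

lemma rank_one_real_iff:
  "rank_one_real H \<longleftrightarrow> add_subgroup H \<and> H \<noteq> {0} \<and>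
     (\<exists>K f. rank_one_rat K \<and> bij_betw f H K \<and> additive_on H f)"
  unfolding rank_one_real_def additive_on_def by blast

lemma ord_group_iso_iff:
  "ord_group_iso H K \<longleftrightarrow>
     (\<exists>f. bij_betw f H K \<and> additive_on H f \<and> (\<forall>x\<in>H. \<forall>y\<in>H. x < y \<longrightarrow> f x < f y))"
  unfolding ord_group_iso_def additive_on_def by blast

lemma additive_on_zero:
  assumes "add_subgroup H" "additive_on H f"
  shows "f 0 = 0"
proof -
  have "f (0 + 0) = f 0 + f 0" using assms add_subgroup_zero unfolding additive_on_def by blast
  then show ?thesis by simp
qed

lemma additive_on_uminus:
  assumes H: "add_subgroup H" and f: "additive_on H f" and x: "x \<in> H"
  shows "f (- x) = - f x"
proof -
  have "f (- x + x) = f (- x) + f x"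
    using f x add_subgroup_uminus[OF H x] unfolding additive_on_def by blast
  then show ?thesis using additive_on_zero[OF H f] by (simp add: eq_neg_iff_add_eq_0)
qed

lemma additive_on_of_nat_mult:
  fixes f :: "'a::ring_1 \<Rightarrow> 'b::ring_1"
  assumes H: "add_subgroup H" and f: "additive_on H f" and x: "x \<in> H"
  shows "f (of_nat n * x) = of_nat n * f x"
proof (induction n)
  case 0
  then show ?case using additive_on_zero[OF H f] by simp
next
  case (Suc n)
  have "f (x + of_nat n * x) = f x + f (of_nat n * x)"
    using f x add_subgroup_of_nat_mult[OF H x] unfolding additive_on_def by blast
  then show ?case using Suc by (simp add: algebra_simps)
qed

lemma additive_on_of_int_mult:
  fixes f :: "'a::ring_1 \<Rightarrow> 'b::ring_1"
  assumes H: "add_subgroup H" and f: "additive_on H f" and x: "x \<in> H"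
  shows "f (of_int i * x) = of_int i * f x"
proof (cases "i \<ge> 0")
  case True
  then have "of_int i * x = of_nat (nat i) * x" "(of_int i :: 'b) * f x = of_nat (nat i) * f x"
    by simp_all
  then show ?thesis using additive_on_of_nat_mult[OF H f x] by metis
next
  case False
  then have "of_int i * x = - (of_nat (nat (- i)) * x)"
    "(of_int i :: 'b) * f x = - (of_nat (nat (- i)) * f x)" by simp_all
  then show ?thesis
    using additive_on_of_nat_mult[OF H f x] additive_on_uminus[OF H f]
      add_subgroup_of_nat_mult[OF H x] by metis
qed

lemma add_subgroup_image:
  assumes H: "add_subgroup H" and f: "additive_on H f"
  shows "add_subgroup (f ` H)"
  unfolding add_subgroup_def
proof (intro conjI ballI)
  show "0 \<in> f ` H" using additive_on_zero[OF H f] add_subgroup_zero[OF H] by (metis image_eqI)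
next
  fix x y assume "x \<in> f ` H" "y \<in> f ` H"
  then obtain p q where "p \<in> H" "q \<in> H" "x = f p" "y = f q" by blast
  then show "x + y \<in> f ` H" using f add_subgroup_add[OF H] unfolding additive_on_def by (metis image_eqI)
next
  fix x assume "x \<in> f ` H"
  then obtain p where "p \<in> H" "x = f p" by blast
  then show "- x \<in> f ` H" using additive_on_uminus[OF H f] add_subgroup_uminus[OF H] by (metis image_eqI)
qed

lemma additive_on_inv_into:
  assumes H: "add_subgroup H" and f: "additive_on H f" and inj: "inj_on f H"
  shows "additive_on (f ` H) (inv_into H f)"
  unfolding additive_on_def
proof (intro ballI)
  fix x y assume "x \<in> f ` H" "y \<in> f ` H"
  then obtain p q where pq: "p \<in> H" "q \<in> H" "x = f p" "y = f q" by blast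
  then have "x + y = f (p + q)" using f unfolding additive_on_def by simp
  then show "inv_into H f (x + y) = inv_into H f x + inv_into H f y"
    using pq inj add_subgroup_add[OF H] by (simp add: inv_into_f_f)
qed

text \<open>The common submultiple is a Bezout combination \<open>u x + v y\<close>.\<close>
lemma add_subgroup_common_submultiple:
  fixes H :: "'a::linordered_field set"
  assumes H: "add_subgroup H" and xy: "x \<in> H" "y \<in> H" "x > 0" "y > 0"
    and km: "(k::int) > 0" "m > 0" and e: "of_int k * x = of_int m * y"
  shows "\<exists>z\<in>H. z > 0 \<and> (\<exists>a b::nat. a > 0 \<and> b > 0 \<and> x = of_nat a * z \<and> y = of_nat b * z)"
proof -
  define g where "g = gcd m k"
  obtain u v where uv: "u * m + v * k = g" using bezout_int[of m k] g_def by metis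
  obtain m' where m': "m = g * m'" using g_def by (meson gcd_dvd1 dvdE)
  obtain k' where k': "k = g * k'" using g_def by (meson gcd_dvd2 dvdE)
  have g: "g > 0" using km g_def by simp
  have pos: "m' > 0" "k' > 0" using m' k' g km by (auto simp: zero_less_mult_iff)
  define z where "z = of_int u * x + of_int v * y"
  have zH: "z \<in> H" unfolding z_def using add_subgroup_of_int_mult add_subgroup_add H xy by metis
  have "of_int m * z = of_int u * (of_int m * x) + of_int v * (of_int m * y)"
    unfolding z_def by (simp add: algebra_simps)
  also have "\<dots> = of_int (u * m + v * k) * x" using e by (simp add: algebra_simps)
  finally have "of_int m * z = of_int g * x" using uv by simp
  then have "of_int g * (of_int m' * z) = of_int g * x" using m' by (simp add: algebra_simps)
  then have xz: "x = of_int m' * z" using g by simp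
  have "of_int g * (of_int m' * y) = of_int g * (of_int m' * (of_int k' * z))"
    using e m' k' xz by (simp add: algebra_simps) (metis mult.commute)
  then have yz: "y = of_int k' * z" using g pos by simp
  have "z > 0" using xz xy pos by (metis of_int_pos zero_less_mult_iff not_less_iff_gr_or_eq)
  moreover have "x = of_nat (nat m') * z" "y = of_nat (nat k') * z" using xz yz pos by simp_all
  ultimately show ?thesis using zH pos by (metis zero_less_nat_eq)
qed

lemma rat_add_subgroup_common_submultiple:
  fixes H :: "rat set"
  assumes "add_subgroup H" "x \<in> H" "y \<in> H" "x > 0" "y > 0"
  shows "\<exists>z\<in>H. z > 0 \<and> (\<exists>a b::nat. a > 0 \<and> b > 0 \<and> x = of_nat a * z \<and> y = of_nat b * z)"
proof -
  obtain p q where pq: "quotient_of (x / y) = (p, q)" by (cases "quotient_of (x / y)") auto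
  have q: "q > 0" using quotient_of_denom_pos[OF pq] .
  have e: "x / y = of_int p / of_int q" using quotient_of_div[OF pq] .
  have "x / y > 0" using assms by simp
  then have p: "p > 0" using e q by (simp add: zero_less_divide_iff)
  have "of_int q * x = of_int p * y" using e q assms(5) by (simp add: field_simps)
  then show ?thesis using add_subgroup_common_submultiple[OF assms q p] by blast
qed

lemma rank_one_real_common_submultiple:
  assumes R: "rank_one_real H" and xy: "x \<in> H" "y \<in> H" "x > 0" "y > 0"
  shows "\<exists>z\<in>H. z > 0 \<and> (\<exists>a b::nat. a > 0 \<and> b > 0 \<and> x = of_nat a * z \<and> y = of_nat b * z)"
proof -
  have H: "add_subgroup H" using R rank_one_real_iff by blast
  obtain K :: "rat set" and f where "bij_betw f H K" and f: "additive_on H f" using R unfolding rank_one_real_iff by blast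
  then have inj: "inj_on f H" by (simp add: bij_betw_def)
  have "f y \<noteq> 0"
    using inj xy additive_on_zero[OF H f] add_subgroup_zero[OF H] unfolding inj_on_def
    by (metis less_irrefl)
  obtain p q where pq: "quotient_of (f x / f y) = (p, q)" by (cases "quotient_of (f x / f y)") auto
  have q: "q > 0" using quotient_of_denom_pos[OF pq] .
  have "f x / f y = of_int p / of_int q" using quotient_of_div[OF pq] .
  then have "of_int q * f x = of_int p * f y" using q \<open>f y \<noteq> 0\<close> by (simp add: field_simps)
  then have "f (of_int q * x) = f (of_int p * y)" using additive_on_of_int_mult[OF H f] xy by simp
  then have e: "of_int q * x = of_int p * y"
    using inj add_subgroup_of_int_mult[OF H] xy unfolding inj_on_def by blast
  have "of_int p * y > (0::real)" using q xy by (simp flip: e)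
  then have "p > 0" using xy by (simp add: zero_less_mult_iff)
  then show ?thesis using add_subgroup_common_submultiple[OF H xy q _ e] by blast
qed

lemma rank_one_real_scaled_rat:
  assumes K: "rank_one_rat K" and c: "c \<noteq> 0"
  shows "rank_one_real ((\<lambda>q. c * of_rat q) ` K)"
proof -
  let ?g = "\<lambda>q. c * of_rat q"
  have K': "add_subgroup K" "K \<noteq> {0}" using K unfolding rank_one_rat_def by auto
  have g: "additive_on K ?g" unfolding additive_on_def by (simp add: of_rat_add algebra_simps)
  have inj: "inj_on ?g K" using c by (simp add: inj_on_def)
  obtain h where "h \<in> K" "h \<noteq> 0" using K' add_subgroup_zero by blast
  then have "?g ` K \<noteq> {0}" using c by (metis image_eqI mult_eq_0_iff of_rat_eq_0_iff singletonD)
  moreover have "bij_betw (inv_into K ?g) (?g ` K) K" using inj by (simp add: bij_betw_inv_into inj_on_imp_bij_betw)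
  ultimately show ?thesis
    unfolding rank_one_real_iff
    using K add_subgroup_image[OF K'(1) g] additive_on_inv_into[OF K'(1) g inj] by blast
qed

definition cone_group :: "'a::linordered_ab_group_add set \<Rightarrow> 'a set" where
  "cone_group P = P \<union> uminus ` P \<union> {0}"

lemma add_subgroup_cone_group:
  fixes P :: "'a::linordered_ab_group_add set"
  assumes pos: "\<And>x. x \<in> P \<Longrightarrow> x > 0"
    and add: "\<And>x y. x \<in> P \<Longrightarrow> y \<in> P \<Longrightarrow> x + y \<in> P"
    and diff: "\<And>x y. x \<in> P \<Longrightarrow> y \<in> P \<Longrightarrow> y < x \<Longrightarrow> x - y \<in> P"
  shows "add_subgroup (cone_group P)"
proof -
  have mixed: "x + - y \<in> cone_group P" if "x \<in> P" "y \<in> P" for x y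
  proof -
    consider "y < x" | "y = x" | "x < y" by fastforce
    then show ?thesis
    proof cases
      case 3
      then have "- (y - x) \<in> cone_group P" using diff that unfolding cone_group_def by blast
      then show ?thesis by (simp add: algebra_simps)
    qed (use diff that in \<open>auto simp: cone_group_def\<close>)
  qed
  have "x + y \<in> cone_group P" if "x \<in> cone_group P" "y \<in> cone_group P" for x y
  proof -
    from that consider "x \<in> P" "y \<in> P" | y' where "x \<in> P" "y = - y'" "y' \<in> P"
      | x' where "x = - x'" "x' \<in> P" "y \<in> P" | x' y' where "x = - x'" "y = - y'" "x' \<in> P" "y' \<in> P"
      | "x = 0" | "y = 0" unfolding cone_group_def by blast
    then show ?thesis
    proof cases
      case 1 then show ?thesis using add unfolding cone_group_def by auto
    next
      case (2 y') then show ?thesis using mixed by auto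
    next
      case (3 x') then show ?thesis using mixed[of y x'] by (simp add: add.commute)
    next
      case (4 x' y') then have "x + y = - (x' + y')" by simp
      then show ?thesis using add 4 unfolding cone_group_def by blast
    qed (use that in auto)
  qed
  moreover have "- x \<in> cone_group P" if "x \<in> cone_group P" for x
    using that unfolding cone_group_def by auto
  ultimately show ?thesis unfolding add_subgroup_def cone_group_def by auto
qed

lemma cone_group_pos_iff:
  fixes P :: "'a::linordered_ab_group_add set"
  assumes "\<And>x. x \<in> P \<Longrightarrow> x > 0"
  shows "x \<in> cone_group P \<and> x > 0 \<longleftrightarrow> x \<in> P"
  using assms unfolding cone_group_def by (auto, fastforce)

text \<open>Extend oddly: \<open>g (- h) = - f h\<close>.\<close>
lemma ord_group_iso_of_pos_cones:
  fixes H K :: "rat set"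
  assumes H: "add_subgroup H" and K: "add_subgroup K"
    and fb: "bij_betw f {h\<in>H. h > 0} {k\<in>K. k > 0}"
    and fa: "\<And>x y. x \<in> H \<Longrightarrow> y \<in> H \<Longrightarrow> x > 0 \<Longrightarrow> y > 0 \<Longrightarrow> f (x + y) = f x + f y"
  shows "ord_group_iso H K"
proof -
  define g where "g h = (if h > 0 then f h else if h = 0 then 0 else - f (- h))" for h
  have fm: "f x \<in> K" "f x > 0" if "x \<in> H" "x > 0" for x using fb that unfolding bij_betw_def by auto
  note Hn = add_subgroup_uminus[OF H] and Ha = add_subgroup_add[OF H]
  have mixed: "g (x + y) = g x + g y" if "x \<in> H" "y \<in> H" "x > 0" "y < 0" for x y
  proof -
    consider "x + y > 0" | "x + y = 0" | "x + y < 0" by fastforce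
    then show ?thesis
    proof cases
      case 1
      have "f ((x + y) + (- y)) = f (x + y) + f (- y)" using fa[of "x + y" "- y"] 1 that Ha Hn by auto
      then show ?thesis using 1 that unfolding g_def by auto
    next
      case 2
      then have "y = - x" by (simp add: add_eq_0_iff2)
      then show ?thesis using that unfolding g_def by auto
    next
      case 3
      have "f (- (x + y) + x) = f (- (x + y)) + f x" using fa[OF Hn[OF Ha[OF that(1,2)]] that(1)] 3 that by simp
      then show ?thesis using 3 that unfolding g_def by auto
    qed
  qed
  have gadd: "g (x + y) = g x + g y" if "x \<in> H" "y \<in> H" for x y
  proof -
    consider "x = 0" | "y = 0" | "x > 0" "y > 0" | "x > 0" "y < 0" | "x < 0" "y > 0" | "x < 0" "y < 0"
      by fastforce
    then show ?thesis
    proof cases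
      case 3 then show ?thesis using fa that unfolding g_def by auto
    next
      case 4 then show ?thesis using mixed that by auto
    next
      case 5 then show ?thesis using mixed[of y x] that by (simp add: add.commute)
    next
      case 6
      have "f (- x + - y) = f (- x) + f (- y)" using fa[of "- x" "- y"] 6 that Hn by auto
      then show ?thesis using 6 unfolding g_def by auto
    qed (auto simp: g_def)
  qed
  have gmono: "g x < g y" if "x \<in> H" "y \<in> H" "x < y" for x y
  proof -
    have d: "y - x \<in> H" "y - x > 0" using add_subgroup_diff[OF H] that by simp_all
    have "g y = g x + g (y - x)" using gadd[OF that(1) d(1)] by simp
    then show ?thesis using fm[OF d] d unfolding g_def by auto
  qed
  have "g x \<in> K" if "x \<in> H" for x
    using that fm[of x] fm[of "- x"] Hn add_subgroup_uminus[OF K] add_subgroup_zero[OF K]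
    unfolding g_def by auto
  moreover have "k \<in> g ` H" if k: "k \<in> K" for k
  proof -
    consider "k > 0" | "k = 0" | "- k > 0" by fastforce
    then show ?thesis
    proof cases
      case 1
      then have "k \<in> f ` {h\<in>H. h > 0}" using fb k unfolding bij_betw_def by auto
      then obtain h where "h \<in> H" "h > 0" "f h = k" by auto
      then show ?thesis unfolding g_def by force
    next
      case 2 then show ?thesis using add_subgroup_zero[OF H] unfolding g_def by force
    next
      case 3
      then have "- k \<in> f ` {h\<in>H. h > 0}" using fb add_subgroup_uminus[OF K k] unfolding bij_betw_def by auto
      then obtain h where h: "h \<in> H" "h > 0" "f h = - k" by auto
      then have "g (- h) = k" unfolding g_def by auto
      then show ?thesis using Hn h by force
    qed
  qed
  moreover have "inj_on g H" unfolding inj_on_def using gmono by (metis linorder_neq_iff less_irrefl)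
  ultimately have "bij_betw g H K" unfolding bij_betw_def by auto
  then show ?thesis unfolding ord_group_iso_iff additive_on_def using gadd gmono by blast
qed

lemma ord_group_iso_pos_cones:
  fixes H K :: "rat set"
  assumes H: "add_subgroup H" and bij: "bij_betw \<phi> H K"
    and add: "additive_on H \<phi>" and mono: "\<And>x y. x \<in> H \<Longrightarrow> y \<in> H \<Longrightarrow> x < y \<Longrightarrow> \<phi> x < \<phi> y"
  shows "bij_betw \<phi> {h\<in>H. h > 0} {k\<in>K. k > 0}"
proof -
  have "\<phi> 0 = 0" using additive_on_zero[OF H add] .
  then have sign: "\<phi> x > 0 \<longleftrightarrow> x > 0" if "x \<in> H" for x
    using mono[OF _ that] mono[OF that] add_subgroup_zero[OF H] by (metis less_asym neq_iff)
  have "{k\<in>K. k > 0} = \<phi> ` {h\<in>H. h > 0}"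
    using bij sign unfolding bij_betw_def by auto
  moreover have "inj_on \<phi> {h\<in>H. h > 0}" using bij unfolding bij_betw_def by (auto intro: inj_on_subset)
  ultimately show ?thesis unfolding bij_betw_def by simp
qed

section \<open>Objects and morphisms of \<open>C\<close>\<close>

lemma obj_nonneg: "obj V \<Longrightarrow> x \<in> V \<Longrightarrow> 0 \<le> x"
  unfolding obj_def by auto

lemma obj_bounded:
  assumes "obj V"
  shows "\<exists>B>0. V \<subseteq> {0..<B}"
proof -
  from assms consider "V = {}" | a b where "0 \<le> a" "a < b" "V = {a<..<b}" | b where "0 < b" "V = {0..<b}"
    unfolding obj_def by blast
  then show ?thesis
  proof cases
    case (2 a b) then show ?thesis by (intro exI[of _ b]) auto
  next
    case (3 b) then show ?thesis by blast
  qed (auto intro: exI[of _ 1])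
qed

lemma obj_greaterThanLessThan: "0 \<le> a \<Longrightarrow> obj {a<..<b}"
  unfolding obj_def by (cases "a < b") auto

lemma obj_atLeastLessThan: "obj {0..<b}"
  unfolding obj_def by (cases "0 < b") auto

lemma obj_Int:
  assumes "obj V" "obj W"
  shows "obj (V \<inter> W)"
proof -
  have "\<And>a b c d::real. {a<..<b} \<inter> {c<..<d} = {max a c<..<min b d}"
    "\<And>a b d::real. 0 \<le> a \<Longrightarrow> {a<..<b} \<inter> {0..<d} = {a<..<min b d}"
    "\<And>a b d::real. 0 \<le> a \<Longrightarrow> {0..<d} \<inter> {a<..<b} = {a<..<min b d}"
    "\<And>b d::real. {0..<b} \<inter> {0..<d} = {0..<min b d}" by auto
  then show ?thesis using assms unfolding obj_def[of V] obj_def[of W]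
    by (elim disjE exE conjE) (simp_all add: obj_greaterThanLessThan obj_atLeastLessThan obj_def[of "{}"])
qed

lemma obj_vimage_mult:
  assumes V: "obj V" and t: "t > 0"
  shows "obj {x. t * x \<in> V}"
proof -
  from V consider "V = {}" | a b where "0 \<le> a" "V = {a<..<b}" | b where "V = {0..<b}"
    unfolding obj_def by blast
  then show ?thesis
  proof cases
    case 1 then show ?thesis by (simp add: obj_def)
  next
    case (2 a b)
    then have "{x. t * x \<in> V} = {a / t<..<b / t}" using t by (auto simp: field_simps)
    then show ?thesis using 2 t by (simp add: obj_greaterThanLessThan)
  next
    case (3 b)
    then have "{x. t * x \<in> V} = {0..<b / t}" using t by (auto simp: field_simps zero_le_mult_iff)
    then show ?thesis by (simp add: obj_atLeastLessThan)
  qed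
qed

lemma obj_nonneg_ball:
  assumes "0 \<le> c" "0 < e"
  shows "obj {x. 0 \<le> x \<and> \<bar>x - c\<bar> < e}"
proof (cases "c - e < 0")
  case True
  then have "{x. 0 \<le> x \<and> \<bar>x - c\<bar> < e} = {0..<c + e}" by auto
  then show ?thesis by (simp add: obj_atLeastLessThan)
next
  case False
  then have "{x. 0 \<le> x \<and> \<bar>x - c\<bar> < e} = {c - e<..<c + e}" using assms by auto
  then show ?thesis using False by (simp add: obj_greaterThanLessThan)
qed

lemma mor_iff: "V \<noteq> {} \<Longrightarrow> n \<in> mor V W \<longleftrightarrow> 0 < n \<and> (\<lambda>x. real n * x) ` V \<subseteq> W"
  unfolding mor_def by simp

lemma mor_mult:
  assumes U: "U \<noteq> {}" and a: "a \<in> mor U V" and n: "n \<in> mor V W"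
  shows "n * a \<in> mor U W"
proof -
  have a': "0 < a" "(\<lambda>x. real a * x) ` U \<subseteq> V" using U a mor_iff by auto
  then have "V \<noteq> {}" using U by auto
  then have "0 < n" "(\<lambda>x. real n * x) ` V \<subseteq> W" using n mor_iff by auto
  then show ?thesis using U a' by (auto simp: mor_iff mult.assoc)
qed

lemma mor_one: "V \<noteq> {} \<Longrightarrow> V \<subseteq> W \<Longrightarrow> 1 \<in> mor V W"
  unfolding mor_def by auto

section \<open>Classification of flat continuous functors\<close>

locale flat_continuous_functor =
  fixes F :: "real set \<Rightarrow> 'a set" and Fm :: "real set \<Rightarrow> real set \<Rightarrow> nat \<Rightarrow> 'a \<Rightarrow> 'a"
  assumes flat_continuous: "flat_continuous F Fm"
begin

lemma is_functor: "is_functor F Fm" and flat: "flat F Fm" and continuous: "continuous_functor F Fm"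
  using flat_continuous unfolding flat_continuous_def by auto

lemma F_empty: "F {} = {}"
proof -
  have "obj {}" by (simp add: obj_def)
  then have "\<forall>x\<in>F {}. \<exists>W\<in>{}. \<exists>y\<in>F W. Fm W {} 1 y = x"
    using continuous unfolding continuous_functor_def by (metis Sup_empty empty_iff)
  then show ?thesis by auto
qed

lemma F_nonempty_obj: "x \<in> F V \<Longrightarrow> V \<noteq> {}"
  using F_empty by auto

lemma Fm_closed: "obj V \<Longrightarrow> obj W \<Longrightarrow> n \<in> mor V W \<Longrightarrow> x \<in> F V \<Longrightarrow> Fm V W n x \<in> F W"
  using is_functor unfolding is_functor_def by blast

lemma Fm_id: "obj V \<Longrightarrow> x \<in> F V \<Longrightarrow> Fm V V 1 x = x"
  using is_functor unfolding is_functor_def by blast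

lemma Fm_comp:
  assumes "obj U" "obj V" "obj W" "n \<in> mor U V" "m \<in> mor V W" "x \<in> F U"
  shows "Fm V W m (Fm U V n x) = Fm U W (m * n) x"
proof -
  have "Fm V W m (Fm U V n x) = Fm U W (cmp U m n) x"
    using is_functor assms unfolding is_functor_def by blast
  then show ?thesis using F_nonempty_obj[OF assms(6)] unfolding cmp_def by simp
qed

lemma filtering:
  "obj V \<Longrightarrow> obj W \<Longrightarrow> x \<in> F V \<Longrightarrow> y \<in> F W \<Longrightarrow>
   \<exists>U z u v. obj U \<and> z \<in> F U \<and> u \<in> mor U V \<and> v \<in> mor U W \<and> Fm U V u z = x \<and> Fm U W v z = y"
  using flat unfolding flat_def by blast

text \<open>The equalizer condition of flatness makes \<open>N\<^sup>\<times>\<close> act freely: \<open>m w = n w\<close> forces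
  \<open>m = n\<close> in the cancellative monoid.\<close>
lemma mor_eqI_Fm:
  assumes "obj U" "obj W" "m \<in> mor U W" "n \<in> mor U W" "z \<in> F U" "Fm U W m z = Fm U W n z"
  shows "m = n"
proof -
  obtain U' z' w where "obj U'" "z' \<in> F U'" "w \<in> mor U' U" "cmp U' m w = cmp U' n w"
    using flat assms unfolding flat_def by metis
  moreover then have "U' \<noteq> {}" using F_nonempty_obj by auto
  ultimately show ?thesis unfolding cmp_def using mor_iff by auto
qed

definition supported_at :: "real set \<Rightarrow> 'a \<Rightarrow> real \<Rightarrow> bool" where
  "supported_at V \<xi> c \<longleftrightarrow> c \<in> V \<and> (\<forall>W. obj W \<and> c \<in> W \<and> W \<subseteq> V \<longrightarrow> (\<exists>y\<in>F W. Fm W V 1 y = \<xi>))"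

text \<open>If no point supported \<open>\<xi>\<close>, the neighbourhoods witnessing this would cover \<open>V\<close>
  without any of them containing a preimage of \<open>\<xi>\<close>, contradicting continuity.\<close>
lemma supported_at_exists:
  assumes V: "obj V" and \<xi>: "\<xi> \<in> F V"
  shows "\<exists>c. supported_at V \<xi> c"
proof (rule ccontr)
  assume "\<nexists>c. supported_at V \<xi> c"
  then have "\<forall>c\<in>V. \<exists>W. obj W \<and> c \<in> W \<and> W \<subseteq> V \<and> \<not> (\<exists>y\<in>F W. Fm W V 1 y = \<xi>)"
    unfolding supported_at_def by blast
  then obtain N where N: "\<forall>c\<in>V. obj (N c) \<and> c \<in> N c \<and> N c \<subseteq> V \<and> \<not> (\<exists>y\<in>F (N c). Fm (N c) V 1 y = \<xi>)"
    by (rule bchoice[THEN exE])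
  have "\<forall>W\<in>N ` V. obj W \<and> W \<subseteq> V" "\<Union> (N ` V) = V" using N by blast+
  then have "\<exists>W\<in>N ` V. \<exists>y\<in>F W. Fm W V 1 y = \<xi>"
    using continuous[unfolded continuous_functor_def, rule_format, of V "N ` V" \<xi>] V \<xi> by blast
  then show False using N by blast
qed

text \<open>Preimages of \<open>\<xi>\<close> on disjoint neighbourhoods of two support points have a common
  preimage \<open>z\<close>; then \<open>\<xi> = u z = v z\<close> forces \<open>u = v\<close>, which cannot map into both.\<close>
lemma supported_at_unique:
  assumes V: "obj V" and \<xi>: "\<xi> \<in> F V" and c: "supported_at V \<xi> c" and d: "supported_at V \<xi> d"
  shows "c = d"
proof (rule ccontr)
  assume "c \<noteq> d"
  define e where "e = \<bar>c - d\<bar> / 2"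
  have e: "e > 0" using \<open>c \<noteq> d\<close> by (simp add: e_def)
  have cd: "0 \<le> c" "0 \<le> d" "c \<in> V" "d \<in> V" using c d V obj_nonneg unfolding supported_at_def by auto
  define W1 where "W1 = V \<inter> {x. 0 \<le> x \<and> \<bar>x - c\<bar> < e}"
  define W2 where "W2 = V \<inter> {x. 0 \<le> x \<and> \<bar>x - d\<bar> < e}"
  have W: "obj W1" "obj W2" unfolding W1_def W2_def using obj_Int obj_nonneg_ball V cd e by auto
  have in_W: "c \<in> W1" "d \<in> W2" "W1 \<subseteq> V" "W2 \<subseteq> V" unfolding W1_def W2_def using cd e by auto
  have disjoint: "W1 \<inter> W2 = {}" unfolding W1_def W2_def e_def by (auto simp: abs_if split: if_splits)
  have incl: "1 \<in> mor W1 V" "1 \<in> mor W2 V" using mor_one in_W by auto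
  obtain y1 where y1: "y1 \<in> F W1" "Fm W1 V 1 y1 = \<xi>" using c W in_W unfolding supported_at_def by blast
  obtain y2 where y2: "y2 \<in> F W2" "Fm W2 V 1 y2 = \<xi>" using d W in_W unfolding supported_at_def by blast
  obtain U z u v where U: "obj U" "z \<in> F U" "u \<in> mor U W1" "v \<in> mor U W2"
    "Fm U W1 u z = y1" "Fm U W2 v z = y2"
    using filtering[OF W y1(1) y2(1)] by blast
  have "U \<noteq> {}" using F_nonempty_obj U by auto
  have "Fm U V u z = Fm U V v z"
    using Fm_comp[OF U(1) W(1) V U(3) incl(1) U(2)] Fm_comp[OF U(1) W(2) V U(4) incl(2) U(2)] U y1 y2
    by simp
  moreover have "u \<in> mor U V" "v \<in> mor U V"
    using mor_mult[OF \<open>U \<noteq> {}\<close> U(3) incl(1)] mor_mult[OF \<open>U \<noteq> {}\<close> U(4) incl(2)] by simp_all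
  ultimately have "u = v" using mor_eqI_Fm[OF U(1) V _ _ U(2)] by blast
  then have "(\<lambda>x. real u * x) ` U \<subseteq> W1 \<inter> W2" using U(3,4) mor_iff \<open>U \<noteq> {}\<close> by auto
  then show False using disjoint \<open>U \<noteq> {}\<close> by auto
qed

lemma supported_at_Fm:
  assumes U: "obj U" and V: "obj V" and z: "z \<in> F U" and a: "a \<in> mor U V"
    and c: "supported_at U z c"
  shows "supported_at V (Fm U V a z) (real a * c)"
proof -
  have "U \<noteq> {}" using z F_nonempty_obj by auto
  then have a': "0 < a" "(\<lambda>x. real a * x) ` U \<subseteq> V" using a mor_iff by auto
  have "c \<in> U" using c supported_at_def by auto
  have "\<exists>y\<in>F W. Fm W V 1 y = Fm U V a z" if W: "obj W" "real a * c \<in> W" "W \<subseteq> V" for W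
  proof -
    define W' where "W' = U \<inter> {x. real a * x \<in> W}"
    have W': "obj W'" "c \<in> W'" "W' \<subseteq> U"
      unfolding W'_def using obj_Int obj_vimage_mult U W a' \<open>c \<in> U\<close> by auto
    then obtain z' where z': "z' \<in> F W'" "Fm W' U 1 z' = z" using c unfolding supported_at_def by blast
    have "W' \<noteq> {}" "W \<noteq> {}" using W W' by auto
    then have mors: "1 \<in> mor W' U" "a \<in> mor W' W" "1 \<in> mor W V"
      using mor_one W W' a' unfolding mor_def W'_def by auto
    have "Fm U V a z = Fm W' V a z'" using Fm_comp[OF W'(1) U V mors(1) a z'(1)] z' by simp
    also have "\<dots> = Fm W V 1 (Fm W' W a z')" using Fm_comp[OF W'(1) W(1) V mors(2,3) z'(1)] by simp
    finally show ?thesis using Fm_closed[OF W'(1) W(1) mors(2) z'(1)] by metis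
  qed
  then show ?thesis using a' \<open>c \<in> U\<close> unfolding supported_at_def by blast
qed

definition V0 :: "real set" where "V0 = (SOME V. obj V \<and> F V \<noteq> {})"
definition x0 :: 'a where "x0 = (SOME x. x \<in> F V0)"

lemma base: "obj V0" "x0 \<in> F V0"
proof -
  have "\<exists>V. obj V \<and> F V \<noteq> {}" using flat unfolding flat_def by blast
  then have "obj V0 \<and> F V0 \<noteq> {}" unfolding V0_def by (rule someI_ex)
  then show "obj V0" "x0 \<in> F V0" unfolding x0_def by (auto intro: someI_ex)
qed

text \<open>Comparing \<open>\<xi>\<close> with the base element \<open>x0\<close> through a common preimage \<open>z\<close>:
  if \<open>\<xi> = a z\<close> and \<open>x0 = b z\<close>, then \<open>\<xi>\<close> is "\<open>a/b\<close> times \<open>x0\<close>".\<close>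
definition is_ratio :: "real set \<Rightarrow> 'a \<Rightarrow> rat \<Rightarrow> bool" where
  "is_ratio V \<xi> q \<longleftrightarrow> (\<exists>U z a b. obj U \<and> z \<in> F U \<and> a \<in> mor U V \<and> b \<in> mor U V0 \<and>
      Fm U V a z = \<xi> \<and> Fm U V0 b z = x0 \<and> q = of_nat a / of_nat b)"

lemma is_ratio_exists: "obj V \<Longrightarrow> \<xi> \<in> F V \<Longrightarrow> \<exists>q. is_ratio V \<xi> q"
  using filtering[OF _ base(1) _ base(2)] unfolding is_ratio_def by blast

text \<open>Two presentations of \<open>\<xi>\<close> and \<open>x0\<close> are refined by a common one; freeness of the action
  then yields \<open>a c = a' c'\<close> and \<open>b c = b' c'\<close>.\<close>
lemma is_ratio_unique:
  assumes V: "obj V" and q: "is_ratio V \<xi> q" and q': "is_ratio V \<xi> q'"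
  shows "q = q'"
proof -
  obtain U z a b where U: "obj U" "z \<in> F U" "a \<in> mor U V" "b \<in> mor U V0"
      "Fm U V a z = \<xi>" "Fm U V0 b z = x0" "q = of_nat a / of_nat b"
    using q unfolding is_ratio_def by blast
  obtain U' z' a' b' where U': "obj U'" "z' \<in> F U'" "a' \<in> mor U' V" "b' \<in> mor U' V0"
      "Fm U' V a' z' = \<xi>" "Fm U' V0 b' z' = x0" "q' = of_nat a' / of_nat b'"
    using q' unfolding is_ratio_def by blast
  obtain T w c c' where T: "obj T" "w \<in> F T" "c \<in> mor T U" "c' \<in> mor T U'"
      "Fm T U c w = z" "Fm T U' c' w = z'"
    using filtering[OF U(1) U'(1) U(2) U'(2)] by blast
  have "T \<noteq> {}" "U \<noteq> {}" "U' \<noteq> {}" using T U U' F_nonempty_obj by auto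
  have "Fm T V (a * c) w = \<xi>" "Fm T V (a' * c') w = \<xi>"
    using Fm_comp[OF T(1) U(1) V T(3) U(3) T(2)] Fm_comp[OF T(1) U'(1) V T(4) U'(3) T(2)] T U U'
    by simp_all
  then have ac: "a * c = a' * c'"
    using mor_eqI_Fm[OF T(1) V mor_mult[OF \<open>T \<noteq> {}\<close> T(3) U(3)] mor_mult[OF \<open>T \<noteq> {}\<close> T(4) U'(3)] T(2)]
    by simp
  have "Fm T V0 (b * c) w = x0" "Fm T V0 (b' * c') w = x0"
    using Fm_comp[OF T(1) U(1) base(1) T(3) U(4) T(2)] Fm_comp[OF T(1) U'(1) base(1) T(4) U'(4) T(2)] T U U'
    by simp_all
  then have bc: "b * c = b' * c'"
    using mor_eqI_Fm[OF T(1) base(1) mor_mult[OF \<open>T \<noteq> {}\<close> T(3) U(4)] mor_mult[OF \<open>T \<noteq> {}\<close> T(4) U'(4)] T(2)]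
    by simp
  have pos: "0 < b" "0 < b'" "0 < c" "0 < c'"
    using U U' T mor_iff \<open>T \<noteq> {}\<close> \<open>U \<noteq> {}\<close> \<open>U' \<noteq> {}\<close> by auto
  have "(a * b') * (c * c') = (a' * b) * (c * c')"
    using ac bc by (metis mult.assoc mult.commute)
  then have "a * b' = a' * b" using pos by simp
  then have "(of_nat a :: rat) * of_nat b' = of_nat a' * of_nat b" by (metis of_nat_mult)
  then show ?thesis unfolding U(7) U'(7) using pos by (simp add: frac_eq_eq)
qed

definition ratio :: "real set \<Rightarrow> 'a \<Rightarrow> rat" where
  "ratio V \<xi> = (SOME q. is_ratio V \<xi> q)"

lemma is_ratio_ratio: "obj V \<Longrightarrow> \<xi> \<in> F V \<Longrightarrow> is_ratio V \<xi> (ratio V \<xi>)"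
  unfolding ratio_def using is_ratio_exists by (metis someI_ex)

lemma ratio_eqI: "obj V \<Longrightarrow> \<xi> \<in> F V \<Longrightarrow> is_ratio V \<xi> q \<Longrightarrow> ratio V \<xi> = q"
  using is_ratio_ratio is_ratio_unique by blast

lemma ratio_pos:
  assumes "obj V" "\<xi> \<in> F V"
  shows "ratio V \<xi> > 0"
proof -
  obtain U z a b where U: "obj U" "z \<in> F U" "a \<in> mor U V" "b \<in> mor U V0"
      "Fm U V a z = \<xi>" "Fm U V0 b z = x0" "ratio V \<xi> = of_nat a / of_nat b"
    using is_ratio_ratio[OF assms] unfolding is_ratio_def by blast
  then have "0 < a" "0 < b" using F_nonempty_obj[OF U(2)] mor_iff by auto
  then show ?thesis using U(7) by simp
qed

lemma ratio_Fm:
  assumes V: "obj V" and W: "obj W" and n: "n \<in> mor V W" and \<xi>: "\<xi> \<in> F V"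
  shows "ratio W (Fm V W n \<xi>) = of_nat n * ratio V \<xi>"
proof -
  obtain U z a b where U: "obj U" "z \<in> F U" "a \<in> mor U V" "b \<in> mor U V0"
      "Fm U V a z = \<xi>" "Fm U V0 b z = x0" "ratio V \<xi> = of_nat a / of_nat b"
    using is_ratio_ratio[OF V \<xi>] unfolding is_ratio_def by blast
  have "n * a \<in> mor U W" using mor_mult[OF F_nonempty_obj[OF U(2)] U(3) n] .
  moreover have "Fm V W n \<xi> = Fm U W (n * a) z" using Fm_comp[OF U(1) V W U(3) n U(2)] U by simp
  ultimately have "is_ratio W (Fm V W n \<xi>) (of_nat (n * a) / of_nat b)"
    unfolding is_ratio_def using U by (intro exI[of _ U] exI[of _ z] exI[of _ "n * a"] exI[of _ b]) auto
  then show ?thesis using ratio_eqI W Fm_closed[OF V W n \<xi>] U(7) by simp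
qed

lemma ratio_inj_on:
  assumes V: "obj V"
  shows "inj_on (ratio V) (F V)"
proof (rule inj_onI)
  fix \<xi> \<zeta> assume "\<xi> \<in> F V" "\<zeta> \<in> F V" and eq: "ratio V \<xi> = ratio V \<zeta>"
  then obtain T w c c' where T: "obj T" "w \<in> F T" "c \<in> mor T V" "c' \<in> mor T V"
      "Fm T V c w = \<xi>" "Fm T V c' w = \<zeta>"
    using filtering[OF V V] by blast
  have "of_nat c * ratio T w = of_nat c' * ratio T w"
    using eq ratio_Fm[OF T(1) V T(3) T(2)] ratio_Fm[OF T(1) V T(4) T(2)] T(5,6) by simp
  then have "c = c'" using ratio_pos[OF T(1,2)] by simp
  then show "\<xi> = \<zeta>" using T by simp
qed

definition scale :: real where "scale = (SOME c. supported_at V0 x0 c)"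

lemma supported_at_scale: "supported_at V0 x0 scale"
  unfolding scale_def using supported_at_exists[OF base] by (metis someI_ex)

lemma scale_nonneg: "0 \<le> scale"
  using supported_at_scale obj_nonneg[OF base(1)] unfolding supported_at_def by blast

lemma supported_at_scale_ratio:
  assumes V: "obj V" and \<xi>: "\<xi> \<in> F V"
  shows "supported_at V \<xi> (scale * of_rat (ratio V \<xi>))"
proof -
  obtain U z a b where U: "obj U" "z \<in> F U" "a \<in> mor U V" "b \<in> mor U V0"
      "Fm U V a z = \<xi>" "Fm U V0 b z = x0" "ratio V \<xi> = of_nat a / of_nat b"
    using is_ratio_ratio[OF V \<xi>] unfolding is_ratio_def by blast
  then have "0 < b" using F_nonempty_obj[OF U(2)] mor_iff by auto
  obtain c where c: "supported_at U z c" using supported_at_exists[OF U(1,2)] by blast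
  have "supported_at V0 x0 (real b * c)" using supported_at_Fm[OF U(1) base(1) U(2,4) c] U by simp
  then have "scale = real b * c" using supported_at_unique[OF base] supported_at_scale by blast
  then have "scale * of_rat (ratio V \<xi>) = real a * c" using U(7) \<open>0 < b\<close> by (simp add: of_rat_divide)
  then show ?thesis using supported_at_Fm[OF U(1) V U(2,3) c] U by simp
qed

definition ratios :: "rat set" where
  "ratios = {q. \<exists>V \<xi>. obj V \<and> \<xi> \<in> F V \<and> q = ratio V \<xi>}"

lemma ratio_in_ratios: "obj V \<Longrightarrow> \<xi> \<in> F V \<Longrightarrow> ratio V \<xi> \<in> ratios"
  unfolding ratios_def by blast

lemma ratios_pos: "q \<in> ratios \<Longrightarrow> q > 0"
  unfolding ratios_def using ratio_pos by blast

lemma one_in_ratios: "1 \<in> ratios"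
proof -
  have "1 \<in> mor V0 V0" using mor_one F_nonempty_obj[OF base(2)] by blast
  then have "is_ratio V0 x0 (of_nat 1 / of_nat 1)"
    unfolding is_ratio_def using base Fm_id[OF base] by (intro exI[of _ V0] exI[of _ x0] exI[of _ 1]) auto
  then have "ratio V0 x0 = 1" using ratio_eqI[OF base] by simp
  then show ?thesis using ratio_in_ratios[OF base] by simp
qed

lemma ratios_common_submultiple:
  assumes "p \<in> ratios" "q \<in> ratios"
  shows "\<exists>U z a b. obj U \<and> z \<in> F U \<and> 0 < a \<and> 0 < b \<and>
           p = of_nat a * ratio U z \<and> q = of_nat b * ratio U z"
proof -
  obtain V \<xi> W \<zeta> where v: "obj V" "\<xi> \<in> F V" "p = ratio V \<xi>" "obj W" "\<zeta> \<in> F W" "q = ratio W \<zeta>"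
    using assms unfolding ratios_def by blast
  obtain U z a b where U: "obj U" "z \<in> F U" "a \<in> mor U V" "b \<in> mor U W"
      "Fm U V a z = \<xi>" "Fm U W b z = \<zeta>"
    using filtering[OF v(1) v(4) v(2) v(5)] by blast
  then have "0 < a" "0 < b" using F_nonempty_obj mor_iff by auto
  moreover have "p = of_nat a * ratio U z" "q = of_nat b * ratio U z" using ratio_Fm U v by auto
  ultimately show ?thesis using U by blast
qed

lemma ratios_of_nat_mult:
  assumes U: "obj U" and z: "z \<in> F U" and n: "0 < n"
  shows "of_nat n * ratio U z \<in> ratios"
proof -
  obtain B where B: "B > 0" "U \<subseteq> {0..<B}" using obj_bounded U by blast
  let ?W = "{0..<real n * B}"
  have "(\<lambda>x. real n * x) ` U \<subseteq> ?W" using B n by auto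
  then have m: "n \<in> mor U ?W" using mor_iff F_nonempty_obj[OF z] n by auto
  show ?thesis
    using ratio_Fm[OF U _ m z] ratio_in_ratios Fm_closed[OF U _ m z] obj_atLeastLessThan by metis
qed

lemma ratios_add: "p \<in> ratios \<Longrightarrow> q \<in> ratios \<Longrightarrow> p + q \<in> ratios"
proof -
  assume "p \<in> ratios" "q \<in> ratios"
  then obtain U z a b where U: "obj U" "z \<in> F U" "0 < a" "0 < b"
    "p = of_nat a * ratio U z" "q = of_nat b * ratio U z"
    using ratios_common_submultiple by blast
  then have "p + q = of_nat (a + b) * ratio U z" by (simp add: algebra_simps)
  then show ?thesis using ratios_of_nat_mult[OF U(1,2), of "a + b"] U by simp
qed

lemma ratios_diff: "p \<in> ratios \<Longrightarrow> q \<in> ratios \<Longrightarrow> q < p \<Longrightarrow> p - q \<in> ratios"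
proof -
  assume "p \<in> ratios" "q \<in> ratios" "q < p"
  then obtain U z a b where U: "obj U" "z \<in> F U" "0 < a" "0 < b"
    "p = of_nat a * ratio U z" "q = of_nat b * ratio U z"
    using ratios_common_submultiple by blast
  then have "b < a" using \<open>q < p\<close> ratio_pos[OF U(1,2)] by (simp add: mult_less_cancel_right)
  then have "p - q = of_nat (a - b) * ratio U z" using U by (simp add: algebra_simps of_nat_diff)
  then show ?thesis using ratios_of_nat_mult[OF U(1,2), of "a - b"] \<open>b < a\<close> by simp
qed

lemma ratio_image:
  assumes V: "obj V"
  shows "ratio V ` F V = {q \<in> ratios. scale * of_rat q \<in> V}"
proof
  show "ratio V ` F V \<subseteq> {q \<in> ratios. scale * of_rat q \<in> V}"
    using supported_at_scale_ratio[OF V] ratio_in_ratios[OF V] unfolding supported_at_def by auto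
next
  show "{q \<in> ratios. scale * of_rat q \<in> V} \<subseteq> ratio V ` F V"
  proof clarify
    fix q assume "q \<in> ratios" and qV: "scale * of_rat q \<in> V"
    then obtain W \<zeta> where W: "obj W" "\<zeta> \<in> F W" "q = ratio W \<zeta>" unfolding ratios_def by blast
    then have supp: "supported_at W \<zeta> (scale * of_rat q)" using supported_at_scale_ratio by blast
    have WV: "obj (W \<inter> V)" "scale * of_rat q \<in> W \<inter> V"
      using obj_Int W V qV supp unfolding supported_at_def by auto
    then obtain y where y: "y \<in> F (W \<inter> V)" "Fm (W \<inter> V) W 1 y = \<zeta>"
      using supp unfolding supported_at_def by blast
    have incl: "1 \<in> mor (W \<inter> V) W" "1 \<in> mor (W \<inter> V) V"
      using mor_one[of "W \<inter> V"] WV(2) by blast+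
    have "q = ratio (W \<inter> V) y" using ratio_Fm[OF WV(1) W(1) incl(1) y(1)] y W by simp
    also have "\<dots> = ratio V (Fm (W \<inter> V) V 1 y)" using ratio_Fm[OF WV(1) V incl(2) y(1)] by simp
    finally show "q \<in> ratio V ` F V" using Fm_closed[OF WV(1) V incl(2) y(1)] by blast
  qed
qed

definition value_group :: "rat set" where "value_group = cone_group ratios"

lemma value_group_pos_iff: "q \<in> value_group \<and> q > 0 \<longleftrightarrow> q \<in> ratios"
  unfolding value_group_def using cone_group_pos_iff ratios_pos by blast

lemma rank_one_rat_value_group: "rank_one_rat value_group"
proof -
  have "add_subgroup value_group"
    unfolding value_group_def using add_subgroup_cone_group ratios_pos ratios_add ratios_diff by blast
  moreover have "1 \<in> value_group" using one_in_ratios value_group_pos_iff by blast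
  ultimately show ?thesis unfolding rank_one_rat_def by auto
qed

lemma nat_iso_through_ratio:
  assumes inj: "inj_on g ratios"
    and G: "\<And>V. obj V \<Longrightarrow> G V = g ` {q \<in> ratios. scale * of_rat q \<in> V}"
    and Gm: "\<And>V W n q. Gm V W n (g q) = g (of_nat n * q)"
  shows "nat_iso F Fm G Gm"
  unfolding nat_iso_def
proof (intro exI[of _ "\<lambda>V \<xi>. g (ratio V \<xi>)"] conjI allI impI)
  fix V assume V: "obj V"
  have "ratio V ` F V \<subseteq> ratios" using ratio_in_ratios[OF V] by blast
  then have "inj_on (g \<circ> ratio V) (F V)"
    using comp_inj_on[OF ratio_inj_on[OF V] inj_on_subset[OF inj]] by blast
  moreover have "(g \<circ> ratio V) ` F V = G V" unfolding image_comp[symmetric] ratio_image[OF V] G[OF V] ..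
  ultimately show "bij_betw (\<lambda>\<xi>. g (ratio V \<xi>)) (F V) (G V)" by (simp add: bij_betw_def comp_def)
next
  fix V W n \<xi> assume "obj V \<and> obj W \<and> n \<in> mor V W \<and> \<xi> \<in> F V"
  then have "ratio W (Fm V W n \<xi>) = of_nat n * ratio V \<xi>" using ratio_Fm by blast
  then show "g (ratio W (Fm V W n \<xi>)) = Gm V W n (g (ratio V \<xi>))" using Gm by simp
qed

theorem classification:
  "(\<exists>H. rank_one_real H \<and> nat_iso F Fm (FH H) FHm) \<or>
   (\<exists>H. rank_one_rat H \<and> nat_iso F Fm (F'H H) F'Hm)"
proof (cases "scale = 0")
  case True
  have "nat_iso F Fm (F'H value_group) F'Hm"
  proof (rule nat_iso_through_ratio[where g = id])
    show "F'H value_group V = id ` {q \<in> ratios. scale * of_rat q \<in> V}" for V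
      using value_group_pos_iff unfolding F'H_def True by auto
  qed (simp_all add: F'Hm_def)
  then show ?thesis using rank_one_rat_value_group by blast
next
  case False
  then have scale: "scale > 0" using scale_nonneg by simp
  let ?g = "\<lambda>q. scale * of_rat q"
  have pos: "?g q > 0 \<longleftrightarrow> q > 0" for q using scale by (simp add: zero_less_mult_iff)
  have "nat_iso F Fm (FH (?g ` value_group)) FHm"
  proof (rule nat_iso_through_ratio)
    show "inj_on ?g ratios" using scale by (simp add: inj_on_def)
    show "FH (?g ` value_group) V = ?g ` {q \<in> ratios. ?g q \<in> V}" for V
      using pos value_group_pos_iff unfolding FH_def by auto
    show "FHm V W n (?g q) = ?g (of_nat n * q)" for V W n q
      by (simp add: FHm_def of_rat_mult)
  qed
  then show ?thesis using rank_one_real_scaled_rat[OF rank_one_rat_value_group False] by blast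
qed

end

section \<open>The points \<open>p\<^sub>H\<close> and \<open>q\<^sub>H\<close>\<close>

lemma is_functor_FH:
  assumes H: "add_subgroup H"
  shows "is_functor (FH H) FHm"
  unfolding is_functor_def
proof (intro conjI allI impI)
  fix V W n x assume a: "obj V \<and> obj W \<and> n \<in> mor V W \<and> x \<in> FH H V"
  then have "0 < n" "(\<lambda>x. real n * x) ` V \<subseteq> W" using mor_iff[of V] unfolding FH_def by auto
  then show "FHm V W n x \<in> FH H W"
    using a add_subgroup_of_nat_mult[OF H] unfolding FH_def FHm_def by auto
next
  fix U V W n m x assume "obj U \<and> obj V \<and> obj W \<and> n \<in> mor U V \<and> m \<in> mor V W \<and> x \<in> FH H U"
  then have "U \<noteq> {}" unfolding FH_def by auto
  then show "FHm V W m (FHm U V n x) = FHm U W (cmp U m n) x" unfolding FHm_def cmp_def by simp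
qed (simp add: FHm_def)

lemma flat_FH:
  assumes R: "rank_one_real H"
  shows "flat (FH H) FHm"
  unfolding flat_def
proof (intro conjI allI impI)
  obtain h where "h \<in> H" "h > 0" using add_subgroup_ex_pos R unfolding rank_one_real_def by blast
  then have "h \<in> FH H {0..<h + 1}" unfolding FH_def by auto
  then show "\<exists>V. obj V \<and> FH H V \<noteq> {}" using obj_atLeastLessThan by blast
next
  fix V W x y assume a: "obj V \<and> obj W \<and> x \<in> FH H V \<and> y \<in> FH H W"
  then obtain z a b where z: "z \<in> H" "z > 0" "a > 0" "b > 0" "x = of_nat a * z" "y = of_nat b * z"
    using rank_one_real_common_submultiple[OF R, of x y] unfolding FH_def by auto
  define U where "U = {t. real a * t \<in> V} \<inter> {t. real b * t \<in> W}"
  have "obj U" unfolding U_def using obj_Int obj_vimage_mult a z by auto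
  moreover have zU: "z \<in> FH H U" using a z unfolding U_def FH_def by auto
  moreover have "a \<in> mor U V" "b \<in> mor U W"
    using z zU mor_iff[of U] unfolding FH_def by (auto simp: U_def)
  ultimately show "\<exists>U z u v. obj U \<and> z \<in> FH H U \<and> u \<in> mor U V \<and> v \<in> mor U W \<and>
                   FHm U V u z = x \<and> FHm U W v z = y" using z unfolding FHm_def by metis
next
  fix V W u v x assume a: "obj V \<and> obj W \<and> u \<in> mor V W \<and> v \<in> mor V W \<and> x \<in> FH H V \<and>
                  FHm V W u x = FHm V W v x"
  then have "u = v" "V \<noteq> {}" unfolding FHm_def FH_def by auto
  then show "\<exists>U z w. obj U \<and> z \<in> FH H U \<and> w \<in> mor U V \<and> FHm U V w z = x \<and>
                 cmp U u w = cmp U v w" using a mor_one[of V V] unfolding FHm_def by force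
qed

lemma continuous_functor_FH: "continuous_functor (FH H) FHm"
  unfolding continuous_functor_def FH_def FHm_def by auto

lemma flat_continuous_FH: "rank_one_real H \<Longrightarrow> flat_continuous (FH H) FHm"
  unfolding flat_continuous_def
  using is_functor_FH flat_FH continuous_functor_FH rank_one_real_def by blast

lemma is_functor_F'H:
  assumes H: "add_subgroup H"
  shows "is_functor (F'H H) F'Hm"
  unfolding is_functor_def
proof (intro conjI allI impI)
  fix V W n x assume a: "obj V \<and> obj W \<and> n \<in> mor V W \<and> x \<in> F'H H V"
  then have V: "0 \<in> V" "x \<in> H" "x > 0" unfolding F'H_def by (auto split: if_splits)
  then have "0 < n" "(\<lambda>x. real n * x) ` V \<subseteq> W" using a mor_iff[of V] by auto
  then have "0 \<in> W" using V by force
  then show "F'Hm V W n x \<in> F'H H W"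
    using V \<open>0 < n\<close> add_subgroup_of_nat_mult[OF H] unfolding F'H_def F'Hm_def by auto
next
  fix U V W n m x assume "obj U \<and> obj V \<and> obj W \<and> n \<in> mor U V \<and> m \<in> mor V W \<and> x \<in> F'H H U"
  then have "U \<noteq> {}" unfolding F'H_def by (auto split: if_splits)
  then show "F'Hm V W m (F'Hm U V n x) = F'Hm U W (cmp U m n) x" unfolding F'Hm_def cmp_def by simp
qed (simp add: F'Hm_def)

lemma flat_F'H:
  assumes H: "add_subgroup H" "H \<noteq> {0}"
  shows "flat (F'H H) F'Hm"
  unfolding flat_def
proof (intro conjI allI impI)
  obtain h where "h \<in> H" "h > 0" using add_subgroup_ex_pos H by blast
  then have "h \<in> F'H H {0..<1}" unfolding F'H_def by auto
  then show "\<exists>V. obj V \<and> F'H H V \<noteq> {}" using obj_atLeastLessThan by blast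
next
  fix V W x y assume "obj V \<and> obj W \<and> x \<in> F'H H V \<and> y \<in> F'H H W"
  then have xy: "obj V" "obj W" "0 \<in> V" "0 \<in> W" "x \<in> H" "y \<in> H" "x > 0" "y > 0"
    unfolding F'H_def by (auto split: if_splits)
  then obtain z a b where z: "z \<in> H" "z > 0" "a > 0" "b > 0" "x = of_nat a * z" "y = of_nat b * z"
    using rat_add_subgroup_common_submultiple[OF H(1), of x y] by auto
  define U where "U = {t. real a * t \<in> V} \<inter> {t. real b * t \<in> W}"
  have "obj U" unfolding U_def using obj_Int obj_vimage_mult xy z by auto
  have "0 \<in> U" unfolding U_def using xy by auto
  then have "U \<noteq> {}" by blast
  have "a \<in> mor U V" "b \<in> mor U W" using z mor_iff[OF \<open>U \<noteq> {}\<close>] by (auto simp: U_def)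
  moreover have "z \<in> F'H H U" using \<open>0 \<in> U\<close> z unfolding F'H_def by auto
  ultimately show "\<exists>U z u v. obj U \<and> z \<in> F'H H U \<and> u \<in> mor U V \<and> v \<in> mor U W \<and>
                   F'Hm U V u z = x \<and> F'Hm U W v z = y" using \<open>obj U\<close> z unfolding F'Hm_def by metis
next
  fix V W u v x assume a: "obj V \<and> obj W \<and> u \<in> mor V W \<and> v \<in> mor V W \<and> x \<in> F'H H V \<and>
                  F'Hm V W u x = F'Hm V W v x"
  then have "u = v" "V \<noteq> {}" unfolding F'Hm_def F'H_def by (auto split: if_splits)
  then show "\<exists>U z w. obj U \<and> z \<in> F'H H U \<and> w \<in> mor U V \<and> F'Hm U V w z = x \<and>
                 cmp U u w = cmp U v w" using a mor_one[of V V] unfolding F'Hm_def by force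
qed

lemma continuous_functor_F'H: "continuous_functor (F'H H) F'Hm"
  unfolding continuous_functor_def F'H_def F'Hm_def by auto

lemma flat_continuous_F'H: "rank_one_rat H \<Longrightarrow> flat_continuous (F'H H) F'Hm"
  unfolding flat_continuous_def rank_one_rat_def
  using is_functor_F'H flat_F'H continuous_functor_F'H by blast

section \<open>Isomorphisms between the points\<close>

text \<open>A natural isomorphism between points of type \<open>p\<close> is the identity: it commutes with
  restriction to arbitrarily small neighbourhoods of \<open>x\<close>, so \<open>\<eta> x\<close> lies in all of them.\<close>
lemma nat_iso_FH_imp_eq:
  assumes iso: "nat_iso (FH H) FHm (FH K) FHm" and V: "obj V"
  shows "FH H V = FH K V"
proof -
  obtain \<eta> where bij: "\<And>V. obj V \<Longrightarrow> bij_betw (\<eta> V) (FH H V) (FH K V)"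
    and nat: "\<And>V W n x. obj V \<Longrightarrow> obj W \<Longrightarrow> n \<in> mor V W \<Longrightarrow> x \<in> FH H V \<Longrightarrow>
              \<eta> W (FHm V W n x) = FHm V W n (\<eta> V x)"
    using iso unfolding nat_iso_def by blast
  have eta_id: "\<eta> V x = x" if x: "x \<in> FH H V" for x
  proof (rule ccontr)
    assume "\<eta> V x \<noteq> x"
    define e where "e = \<bar>\<eta> V x - x\<bar>"
    have "e > 0" using \<open>\<eta> V x \<noteq> x\<close> e_def by simp
    have "x \<in> V" "0 \<le> x" using x unfolding FH_def by auto
    define W where "W = V \<inter> {t. 0 \<le> t \<and> \<bar>t - x\<bar> < e}"
    have W: "obj W" "x \<in> W" "W \<subseteq> V"
      unfolding W_def using obj_Int[OF V obj_nonneg_ball] \<open>x \<in> V\<close> \<open>0 \<le> x\<close> \<open>e > 0\<close> by auto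
    have incl: "1 \<in> mor W V" using mor_one W by blast
    have xW: "x \<in> FH H W" using W x unfolding FH_def by auto
    have "\<eta> V x = \<eta> W x" using nat[OF W(1) V incl xW] unfolding FHm_def by simp
    moreover have "\<eta> W x \<in> FH K W" using bij[OF W(1)] xW unfolding bij_betw_def by auto
    ultimately have "\<eta> V x \<in> W" unfolding FH_def by auto
    then show False unfolding W_def e_def by simp
  qed
  have "FH K V = \<eta> V ` FH H V" using bij[OF V] unfolding bij_betw_def by simp
  also have "\<dots> = FH H V" using eta_id by simp
  finally show ?thesis by simp
qed

lemma nat_iso_FH_iff:
  assumes H: "add_subgroup H" and K: "add_subgroup K"
  shows "nat_iso (FH H) FHm (FH K) FHm \<longleftrightarrow> H = K"
proof
  assume iso: "nat_iso (FH H) FHm (FH K) FHm"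
  have "h \<in> H \<longleftrightarrow> h \<in> K" if "h > 0" for h
  proof -
    have "FH H {0..<h + 1} = FH K {0..<h + 1}" using nat_iso_FH_imp_eq[OF iso obj_atLeastLessThan] .
    then show ?thesis using that unfolding FH_def by (metis Int_iff atLeastLessThan_iff greaterThan_iff less_add_one less_le)
  qed
  then show "H = K" using add_subgroup_eqI_pos[OF H K] by blast
next
  assume "H = K"
  then show "nat_iso (FH H) FHm (FH K) FHm" unfolding nat_iso_def
    by (intro exI[of _ "\<lambda>V x. x"]) (simp add: bij_betw_def FHm_def)
qed

lemma not_nat_iso_FH_F'H:
  assumes H: "add_subgroup H" "H \<noteq> {0}"
  shows "\<not> nat_iso (FH H) FHm (F'H K) F'Hm"
proof
  assume "nat_iso (FH H) FHm (F'H K) F'Hm"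
  then obtain \<eta> where bij: "\<And>V. obj V \<Longrightarrow> bij_betw (\<eta> V) (FH H V) (F'H K V)"
    unfolding nat_iso_def by blast
  obtain h where h: "h \<in> H" "h > 0" using add_subgroup_ex_pos[OF H] by blast
  let ?V = "{h / 2<..<2 * h}"
  have "bij_betw (\<eta> ?V) (FH H ?V) (F'H K ?V)" using bij obj_greaterThanLessThan h by simp
  moreover have "h \<in> FH H ?V" "F'H K ?V = {}" using h unfolding FH_def F'H_def by auto
  ultimately show False unfolding bij_betw_def by blast
qed

text \<open>A natural isomorphism between points of type \<open>q\<close> is a single \<open>N\<^sup>\<times>\<close>-equivariant
  bijection \<open>H\<^sub>+ \<rightarrow> K\<^sub>+\<close>, by restriction to \<open>[0, 1)\<close>; equivariance plus common submultiples
  make it additive.\<close>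
lemma nat_iso_F'H_imp_ord_group_iso:
  assumes H: "add_subgroup H" and K: "add_subgroup K" and iso: "nat_iso (F'H H) F'Hm (F'H K) F'Hm"
  shows "ord_group_iso H K"
proof -
  obtain \<eta> where bij: "\<And>V. obj V \<Longrightarrow> bij_betw (\<eta> V) (F'H H V) (F'H K V)"
    and nat: "\<And>V W n x. obj V \<Longrightarrow> obj W \<Longrightarrow> n \<in> mor V W \<Longrightarrow> x \<in> F'H H V \<Longrightarrow>
              \<eta> W (F'Hm V W n x) = F'Hm V W n (\<eta> V x)"
    using iso unfolding nat_iso_def by blast
  let ?I = "{0..<1::real}"
  define f where "f = \<eta> ?I"
  have restrict: "\<eta> V x = f x" if x: "x \<in> H" "x > 0" and V: "obj V" "0 \<in> V" for V x
  proof -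
    have W: "obj (V \<inter> ?I)" "0 \<in> V \<inter> ?I" using obj_Int[OF V(1) obj_atLeastLessThan] V(2) by auto
    then have incl: "1 \<in> mor (V \<inter> ?I) V" "1 \<in> mor (V \<inter> ?I) ?I"
      using mor_one[of "V \<inter> ?I"] by blast+
    have xW: "x \<in> F'H H (V \<inter> ?I)" using W x unfolding F'H_def by auto
    have "\<eta> V x = \<eta> (V \<inter> ?I) x" using nat[OF W(1) V(1) incl(1) xW] unfolding F'Hm_def by simp
    also have "\<dots> = f x" using nat[OF W(1) obj_atLeastLessThan incl(2) xW] unfolding F'Hm_def f_def by simp
    finally show ?thesis .
  qed
  have f_mult: "f (of_nat n * x) = of_nat n * f x" if x: "x \<in> H" "x > 0" and n: "n > 0" for n x
  proof -
    let ?J = "{0..<real n}"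
    have "(\<lambda>t. real n * t) ` ?I \<subseteq> ?J" using n by auto
    then have m: "n \<in> mor ?I ?J" using n mor_iff[of ?I] by auto
    have xI: "x \<in> F'H H ?I" using x unfolding F'H_def by auto
    have "\<eta> ?J (of_nat n * x) = of_nat n * f x"
      using nat[OF obj_atLeastLessThan obj_atLeastLessThan m xI] unfolding F'Hm_def f_def by simp
    moreover have "of_nat n * x \<in> H" "of_nat n * x > 0" using add_subgroup_of_nat_mult[OF H] x n by auto
    moreover have "(0::real) \<in> ?J" using n by simp
    ultimately show ?thesis using restrict obj_atLeastLessThan by metis
  qed
  have "bij_betw f {h\<in>H. h > 0} {k\<in>K. k > 0}"
    using bij[OF obj_atLeastLessThan, of 1] unfolding f_def F'H_def by simp
  moreover have "f (x + y) = f x + f y" if xy: "x \<in> H" "y \<in> H" "x > 0" "y > 0" for x y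
  proof -
    obtain z a b where z: "z \<in> H" "z > 0" "a > 0" "b > 0" "x = of_nat a * z" "y = of_nat b * z"
      using rat_add_subgroup_common_submultiple[OF H xy] by blast
    then have "x + y = of_nat (a + b) * z" by (simp add: algebra_simps)
    then have "f (x + y) = of_nat (a + b) * f z" using f_mult[of z "a + b"] z by (simp del: of_nat_add)
    moreover have "f x = of_nat a * f z" "f y = of_nat b * f z" using f_mult z by auto
    ultimately show ?thesis by (simp add: algebra_simps)
  qed
  ultimately show ?thesis using ord_group_iso_of_pos_cones[OF H K] by blast
qed

lemma ord_group_iso_imp_nat_iso_F'H:
  assumes H: "add_subgroup H" and iso: "ord_group_iso H K"
  shows "nat_iso (F'H H) F'Hm (F'H K) F'Hm"
proof -
  obtain \<phi> where bij: "bij_betw \<phi> H K" and add: "additive_on H \<phi>"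
    and mono: "\<And>x y. x \<in> H \<Longrightarrow> y \<in> H \<Longrightarrow> x < y \<Longrightarrow> \<phi> x < \<phi> y"
    using iso unfolding ord_group_iso_iff by blast
  have "bij_betw \<phi> (F'H H V) (F'H K V)" for V
    using ord_group_iso_pos_cones[OF H bij add mono] unfolding F'H_def by (simp add: bij_betw_def)
  moreover have "\<phi> (F'Hm V W n x) = F'Hm V W n (\<phi> x)" if "x \<in> F'H H V" for V W n x
    using that additive_on_of_nat_mult[OF H add] unfolding F'H_def F'Hm_def by (auto split: if_splits)
  ultimately show ?thesis unfolding nat_iso_def by (intro exI[of _ "\<lambda>V. \<phi>"]) blast
qed

theorem theorem3p9:
  shows "(\<forall>H. rank_one_real H \<longrightarrow> flat_continuous (FH H) FHm) \<and>
         (\<forall>H. rank_one_rat H \<longrightarrow> flat_continuous (F'H H) F'Hm) \<and>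
         (\<forall>(F :: real set \<Rightarrow> 'a set) Fm. flat_continuous F Fm \<longrightarrow>
             (\<exists>H. rank_one_real H \<and> nat_iso F Fm (FH H) FHm) \<or>
             (\<exists>H. rank_one_rat H \<and> nat_iso F Fm (F'H H) F'Hm)) \<and>
         (\<forall>H K. rank_one_real H \<and> rank_one_real K \<longrightarrow>
             (nat_iso (FH H) FHm (FH K) FHm \<longleftrightarrow> H = K)) \<and>
         (\<forall>H K. rank_one_rat H \<and> rank_one_rat K \<longrightarrow>
             (nat_iso (F'H H) F'Hm (F'H K) F'Hm \<longleftrightarrow> ord_group_iso H K)) \<and>
         (\<forall>H K. rank_one_real H \<and> rank_one_rat K \<longrightarrow>
             \<not> nat_iso (FH H) FHm (F'H K) F'Hm)"
proof (intro conjI allI impI)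
  fix F :: "real set \<Rightarrow> 'a set" and Fm assume "flat_continuous F Fm"
  then show "(\<exists>H. rank_one_real H \<and> nat_iso F Fm (FH H) FHm) \<or>
             (\<exists>H. rank_one_rat H \<and> nat_iso F Fm (F'H H) F'Hm)"
    by (rule flat_continuous_functor.classification[OF flat_continuous_functor.intro])
next
  fix H K :: "rat set" assume "rank_one_rat H \<and> rank_one_rat K"
  then show "nat_iso (F'H H) F'Hm (F'H K) F'Hm \<longleftrightarrow> ord_group_iso H K"
    using nat_iso_F'H_imp_ord_group_iso ord_group_iso_imp_nat_iso_F'H
    unfolding rank_one_rat_def by blast
qed (use flat_continuous_FH flat_continuous_F'H nat_iso_FH_iff not_nat_iso_FH_F'H
      in \<open>auto simp: rank_one_real_def\<close>)

end
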